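(* Let $u_1,\ldots,u_6\in\mathbb{R}^3$ be arbitrary vectors and define $v_{i+1}=[u_i,u_{i+1}]$ for $i=1,\ldots,6$ (indices mod $6$, so $v_1=[u_6,u_1]$). Let $\Delta_i=(v_i,[v_{i+1},v_{i+2}])$ for $i=1,\ldots,6$ (indices mod $6$). Then $\Delta_1\Delta_3\Delta_5=\Delta_2\Delta_4\Delta_6$.
   Context: $(a,b)$ denotes the dot product and $[a,b]$ the cross product in $\mathbb{R}^3$; $(a,[b,c])=\det(a,b,c)$. *)

theory Defs
  imports "HOL-Analysis.Analysis"
begin

end

theory Submission
  imports Defs
begin

text \<open>Writing \<open>v\<^sub>i = [u\<^sub>i\<^sub>-\<^sub>1, u\<^sub>i]\<close>, the vector \<open>[v\<^sub>i\<^sub>+\<^sub>1, v\<^sub>i\<^sub>+\<^sub>2]\<close> is parallel to the shared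
  factor \<open>u\<^sub>i\<^sub>+\<^sub>1\<close>, which gives \<open>\<Delta>\<^sub>i = \<delta>\<^sub>i \<delta>\<^sub>i\<^sub>+\<^sub>1\<close> with \<open>\<delta>\<^sub>i = (u\<^sub>i\<^sub>-\<^sub>1, [u\<^sub>i, u\<^sub>i\<^sub>+\<^sub>1])\<close>.
  Both sides of the identity are therefore the product of all six \<open>\<delta>\<^sub>i\<close>.\<close>

lemma cross_cross_shared:
  fixes b c d :: "real^3"
  shows "cross3 (cross3 b c) (cross3 c d) = (b \<bullet> cross3 c d) *\<^sub>R c"
proof -
  have "det (vector [b, c, c]) = 0"
    by (simp add: det_3 vector_def)
  then show ?thesis
    by (simp add: cross_cross_det dot_cross_det)
qed

lemma dot_cross_cross_shared:
  fixes a b c d :: "real^3"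
  shows "cross3 a b \<bullet> cross3 (cross3 b c) (cross3 c d) = (a \<bullet> cross3 b c) * (b \<bullet> cross3 c d)"
proof -
  have "cross3 a b \<bullet> c = a \<bullet> cross3 b c"
    by (simp add: cross3_simps)
  then show ?thesis
    by (simp add: cross_cross_shared)
qed

theorem mainTheorem5:
  fixes u1 u2 u3 u4 u5 u6 :: "real^3"
  defines "v1 \<equiv> cross3 u6 u1" and "v2 \<equiv> cross3 u1 u2" and "v3 \<equiv> cross3 u2 u3"
      and "v4 \<equiv> cross3 u3 u4" and "v5 \<equiv> cross3 u4 u5" and "v6 \<equiv> cross3 u5 u6"
  defines "D1 \<equiv> v1 \<bullet> cross3 v2 v3" and "D2 \<equiv> v2 \<bullet> cross3 v3 v4"
      and "D3 \<equiv> v3 \<bullet> cross3 v4 v5" and "D4 \<equiv> v4 \<bullet> cross3 v5 v6"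
      and "D5 \<equiv> v5 \<bullet> cross3 v6 v1" and "D6 \<equiv> v6 \<bullet> cross3 v1 v2"
  shows "D1 * D3 * D5 = D2 * D4 * D6"
  unfolding D1_def D2_def D3_def D4_def D5_def D6_def
    v1_def v2_def v3_def v4_def v5_def v6_def dot_cross_cross_shared
  by (simp add: mult_ac)

end
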